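(* Let $f:X\to Y$ be a local homeomorphism between metric spaces. Then for every non-isolated point $x\in X$, $D_x^-f=\operatorname{sur}(f,x)$.
   Context: For a continuous map $f:X\to Y$ between metric spaces and a non-isolated point $x\in X$, the lower scalar derivative is $D_x^-f=\liminf_{z\to x,\,z\neq x}\frac{d(f(z),f(x))}{d(z,x)}\in[0,\infty]$. For $x\in X$ and $t>0$, $\operatorname{Sur}(f,x)(t)=\sup\{r\ge 0: B_r(f(x))\subset f(B_t(x))\}$, where $B_r(\cdot)$ denotes the open ball, and the surjection constant is $\operatorname{sur}(f,x)=\liminf_{t\to 0^+} t^{-1}\operatorname{Sur}(f,x)(t)$. *)

theory Defs
  imports "HOL-Analysis.Analysis"
begin

definition local_homeomorphism :: "('a::metric_space \<Rightarrow> 'b::metric_space) \<Rightarrow> bool" where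
  "local_homeomorphism f \<longleftrightarrow>
     (\<forall>x. \<exists>U. open U \<and> x \<in> U \<and> open (f ` U) \<and> (\<exists>g. homeomorphism U (f ` U) f g))"

definition lower_scalar_derivative ::
    "('a::metric_space \<Rightarrow> 'b::metric_space) \<Rightarrow> 'a \<Rightarrow> ereal" where
  "lower_scalar_derivative f x =
     Liminf (at x) (\<lambda>z. ereal (dist (f z) (f x) / dist z x))"

definition Sur :: "('a::metric_space \<Rightarrow> 'b::metric_space) \<Rightarrow> 'a \<Rightarrow> real \<Rightarrow> ereal" where
  "Sur f x t = Sup (ereal ` {r. r \<ge> 0 \<and> ball (f x) r \<subseteq> f ` ball x t})"

definition sur :: "('a::metric_space \<Rightarrow> 'b::metric_space) \<Rightarrow> 'a \<Rightarrow> ereal" where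
  "sur f x = Liminf (at_right 0) (\<lambda>t. Sur f x t / ereal t)"

end

theory Submission
  imports Defs
begin

text \<open>If f expands distances near x by a factor at least c and f(B_d(x)) contains a ball around
  f x, then f(B_t(x)) contains B_{ct}(f x) for small t, giving D_x^- f \<le> sur(f,x). Conversely,
  if f is injective near x, then f z \<notin> f(B_t(x)) for t = d(z,x), so Sur(f,x)(t) \<le> d(f z, f x),
  giving sur(f,x) \<le> D_x^- f. A local homeomorphism has both properties.\<close>

lemma local_homeomorphism_inj_on_ball:
  assumes "local_homeomorphism f"
  obtains e where "e > 0" "inj_on f (ball x e)"
proof -
  obtain U g where U: "open U" "x \<in> U" "homeomorphism U (f ` U) f g"
    using assms unfolding local_homeomorphism_def by blast
  obtain e where "e > 0" "ball x e \<subseteq> U"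
    using U(1,2) open_contains_ball by blast
  moreover have "inj_on f U"
    using U(3) unfolding homeomorphism_def by (metis inj_on_inverseI)
  ultimately show thesis
    using that inj_on_subset by blast
qed

lemma local_homeomorphism_image_ball_contains_ball:
  assumes "local_homeomorphism f" "d > 0"
  obtains \<rho> where "\<rho> > 0" "ball (f x) \<rho> \<subseteq> f ` ball x d"
proof -
  obtain U g where U: "open U" "x \<in> U" "open (f ` U)" "homeomorphism U (f ` U) f g"
    using assms(1) unfolding local_homeomorphism_def by blast
  have "openin (top_of_set (f ` U)) (f ` (U \<inter> ball x d))"
    using homeomorphism_imp_open_map[OF U(4)] by (simp add: openin_open_Int)
  then have "open (f ` (U \<inter> ball x d))"
    using U(3) openin_open_trans by blast
  moreover have "f x \<in> f ` (U \<inter> ball x d)"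
    using U(2) assms(2) by simp
  ultimately obtain \<rho> where "\<rho> > 0" "ball (f x) \<rho> \<subseteq> f ` (U \<inter> ball x d)"
    using open_contains_ball by blast
  then show thesis
    using that by blast
qed

lemma Sur_nonneg: "0 \<le> Sur f x t"
  unfolding Sur_def by (rule Sup_upper2[of 0]) auto

lemma Sur_ge:
  assumes "0 \<le> r" "ball (f x) r \<subseteq> f ` ball x t"
  shows "ereal r \<le> Sur f x t"
  unfolding Sur_def using assms by (intro Sup_upper) auto

lemma Sur_le_dist:
  assumes "inj_on f S" "ball x t \<subseteq> S" "z \<in> S" "t \<le> dist z x"
  shows "Sur f x t \<le> ereal (dist (f z) (f x))"
  unfolding Sur_def
proof (rule Sup_least, clarify)
  fix r assume "ball (f x) r \<subseteq> f ` ball x t"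
  moreover have "f z \<notin> f ` ball x t"
    using assms by (auto simp: inj_on_eq_iff dist_commute subset_iff)
  ultimately show "ereal r \<le> ereal (dist (f z) (f x))"
    by (metis dist_commute ereal_less_eq(3) mem_ball not_le subsetD)
qed

lemma sur_nonneg: "0 \<le> sur f x"
proof -
  have "\<forall>\<^sub>F t in at_right 0. 0 \<le> Sur f x t / ereal t"
    using eventually_at_right_less
    by (rule eventually_mono) (simp add: ereal_le_divide_pos Sur_nonneg)
  then show ?thesis
    unfolding sur_def by (rule Liminf_bounded)
qed

lemma ball_subset_image_ball_if_expanding:
  assumes "0 \<le> c" "c * t \<le> \<rho>" "ball (f x) \<rho> \<subseteq> f ` ball x d"
    and expand: "\<And>z. z \<in> ball x d \<Longrightarrow> c * dist z x \<le> dist (f z) (f x)"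
  shows "ball (f x) (c * t) \<subseteq> f ` ball x t"
proof
  fix w assume w: "w \<in> ball (f x) (c * t)"
  then have "w \<in> f ` ball x d"
    using assms(2,3) by (meson mem_ball order_less_le_trans subsetD)
  then obtain z where z: "z \<in> ball x d" "w = f z"
    by blast
  have "c * dist z x < c * t"
    using expand[OF z(1)] w z(2) by (simp add: dist_commute)
  then have "dist z x < t"
    using assms(1) by (meson mult_left_mono not_less)
  then show "w \<in> f ` ball x t"
    using z(2) by (auto simp: dist_commute)
qed

lemma lower_scalar_derivative_le_sur:
  assumes image_ball: "\<And>d. d > 0 \<Longrightarrow> \<exists>\<rho>>0. ball (f x) \<rho> \<subseteq> f ` ball x d"
  shows "lower_scalar_derivative f x \<le> sur f x"
proof (rule ccontr)
  assume "\<not> ?thesis"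
  then obtain c where c: "sur f x < ereal c" "ereal c < lower_scalar_derivative f x"
    using ereal_dense2 by (meson not_le)
  have "0 < ereal c"
    using sur_nonneg c(1) by (rule le_less_trans)
  then have "c > 0"
    by simp
  have "\<forall>\<^sub>F z in at x. ereal c < ereal (dist (f z) (f x) / dist z x)"
    using c(2) le_Liminf_iff[THEN iffD1, OF order.refl]
    unfolding lower_scalar_derivative_def by blast
  then obtain d where "d > 0" and "\<And>z. z \<noteq> x \<Longrightarrow> dist z x < d \<Longrightarrow> c * dist z x < dist (f z) (f x)"
    unfolding eventually_at by (auto simp: pos_less_divide_eq)
  then have expand: "\<And>z. z \<in> ball x d \<Longrightarrow> c * dist z x \<le> dist (f z) (f x)"
    by (metis dist_commute dist_self less_eq_real_def mem_ball mult_zero_right)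
  obtain \<rho> where "\<rho> > 0" "ball (f x) \<rho> \<subseteq> f ` ball x d"
    using image_ball \<open>d > 0\<close> by blast
  have "ereal c \<le> Sur f x t / ereal t" if "0 < t" "t < \<rho> / c" for t
  proof -
    have "c * t \<le> \<rho>"
      using that \<open>c > 0\<close> by (simp add: pos_less_divide_eq mult.commute)
    then have "ereal (c * t) \<le> Sur f x t"
      using \<open>c > 0\<close> \<open>0 < t\<close> \<open>ball (f x) \<rho> \<subseteq> _\<close> expand
      by (intro Sur_ge ball_subset_image_ball_if_expanding) auto
    then show ?thesis
      using \<open>0 < t\<close> by (simp add: ereal_le_divide_pos mult.commute)
  qed
  then have "\<forall>\<^sub>F t in at_right 0. ereal c \<le> Sur f x t / ereal t"
    using \<open>\<rho> > 0\<close> \<open>c > 0\<close> unfolding eventually_at_right_field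
    by (intro exI[of _ "\<rho> / c"]) auto
  then have "ereal c \<le> sur f x"
    unfolding sur_def by (rule Liminf_bounded)
  with c(1) show False
    by simp
qed

lemma Liminf_antimono_filter:
  fixes g :: "_ \<Rightarrow> _ :: complete_linorder"
  assumes "F \<le> G"
  shows "Liminf G g \<le> Liminf F g"
  unfolding le_Liminf_iff
proof (intro allI impI)
  fix y assume "y < Liminf G g"
  then have "\<forall>\<^sub>F z in G. y < g z"
    using le_Liminf_iff[of "Liminf G g"] by blast
  then show "\<forall>\<^sub>F z in F. y < g z"
    by (rule filter_leD[OF assms])
qed

lemma sur_le_lower_scalar_derivative:
  assumes "e > 0" "inj_on f (ball x e)"
  shows "sur f x \<le> lower_scalar_derivative f x"
proof -
  let ?ratio = "\<lambda>t. Sur f x t / ereal t"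
  have "filterlim (\<lambda>z. dist z x) (at_right 0) (at x)"
    by (intro tendsto_imp_filterlim_at_right tendsto_dist_iff[THEN iffD1] tendsto_ident_at)
      (simp add: eventually_at_filter)
  then have "sur f x \<le> Liminf (filtermap (\<lambda>z. dist z x) (at x)) ?ratio"
    unfolding sur_def filterlim_def by (rule Liminf_antimono_filter)
  also have "\<dots> \<le> Liminf (at x) (\<lambda>z. ?ratio (dist z x))"
    by (rule Liminf_filtermap_le)
  also have "\<dots> \<le> lower_scalar_derivative f x"
    unfolding lower_scalar_derivative_def
  proof (rule Liminf_mono)
    have "?ratio (dist z x) \<le> ereal (dist (f z) (f x) / dist z x)" if "z \<in> ball x e" "z \<noteq> x" for z
    proof -
      have "ball x (dist z x) \<subseteq> ball x e"
        using that(1) by (intro subset_ball) (simp add: dist_commute)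
      with assms(2) have "Sur f x (dist z x) \<le> ereal (dist (f z) (f x))"
        using that(1) by (rule Sur_le_dist) simp
      then show ?thesis
        using that(2) Sur_nonneg[of f x "dist z x"] by (intro ereal_divide_le_posI) auto
    qed
    then show "\<forall>\<^sub>F z in at x. ?ratio (dist z x) \<le> ereal (dist (f z) (f x) / dist z x)"
      using assms(1) unfolding eventually_at by (auto simp: dist_commute)
  qed
  finally show ?thesis .
qed

theorem mainTheorem6:
  fixes f :: "'a::metric_space \<Rightarrow> 'b::metric_space" and x :: 'a
  assumes "local_homeomorphism f"
    and "x islimpt (UNIV :: 'a set)"
  shows "lower_scalar_derivative f x = sur f x"
proof (rule antisym)
  show "lower_scalar_derivative f x \<le> sur f x"
    using local_homeomorphism_image_ball_contains_ball[OF assms(1)]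
    by (metis lower_scalar_derivative_le_sur)
  obtain e where "e > 0" "inj_on f (ball x e)"
    using local_homeomorphism_inj_on_ball[OF assms(1)] .
  then show "sur f x \<le> lower_scalar_derivative f x"
    by (rule sur_le_lower_scalar_derivative)
qed

end
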